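(* Let $2 \le t < k < v$ and let $(X,\mathcal{B})$ be a $t$-$(v,k,1)$-design. Let $B = \{x_1,\dots,x_k\} \in \mathcal{B}$. Then the cutsets for $B$ are exactly the sets $\mathcal{C}_1,\dots,\mathcal{C}_k$, where $\mathcal{C}_j = \{B' \in \mathcal{B}\setminus\{B\} : x_j \in B'\}$.
   Context: A $t$-$(v,k,\lambda)$-design is a set $X$ of $v$ points together with a collection $\mathcal{B}$ of $k$-subsets of $X$ (blocks) such that every $t$-subset of $X$ lies in exactly $\lambda$ blocks. For a fixed block $B$, a repair set for $B$ is a subset $\mathcal{P}\subseteq \mathcal{B}\setminus\{B\}$ with $B \subseteq \bigcup_{B'\in\mathcal{P}} B'$. Each block of $\mathcal{B}\setminus\{B\}$ is either available or not; a repair set is available if all its blocks are available. A cutset for $B$ is a subset $\mathcal{B}'\subseteq\mathcal{B}\setminus\{B\}$, minimal with respect to inclusion, such that if every block in $\mathcal{B}'$ is unavailable then no available repair set for $B$ exists (i.e., $(\mathcal{B}\setminus\{B\})\setminus\mathcal{B}'$ contains no repair set for $B$). *)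

theory Defs
  imports Main
begin

definition t_design :: "'a set \<Rightarrow> 'a set set \<Rightarrow> nat \<Rightarrow> nat \<Rightarrow> nat \<Rightarrow> nat \<Rightarrow> bool" where
  "t_design X \<B> t v k lam \<longleftrightarrow>
     finite X \<and> card X = v \<and>
     (\<forall>B\<in>\<B>. B \<subseteq> X \<and> card B = k) \<and>
     (\<forall>T. T \<subseteq> X \<and> card T = t \<longrightarrow> card {B\<in>\<B>. T \<subseteq> B} = lam)"

definition repair_set :: "'a set set \<Rightarrow> 'a set \<Rightarrow> 'a set set \<Rightarrow> bool" where
  "repair_set \<B> B \<P> \<longleftrightarrow> \<P> \<subseteq> \<B> - {B} \<and> B \<subseteq> \<Union>\<P>"

definition cutset :: "'a set set \<Rightarrow> 'a set \<Rightarrow> 'a set set \<Rightarrow> bool" where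
  "cutset \<B> B \<C> \<longleftrightarrow>
     \<C> \<subseteq> \<B> - {B} \<and>
     \<not> (\<exists>\<P>. repair_set \<B> B \<P> \<and> \<P> \<subseteq> (\<B> - {B}) - \<C>) \<and>
     (\<forall>\<C>'. \<C>' \<subset> \<C> \<longrightarrow> (\<exists>\<P>. repair_set \<B> B \<P> \<and> \<P> \<subseteq> (\<B> - {B}) - \<C>'))"

end

theory Submission
  imports Defs
begin

text \<open>For any family of blocks, a cutset for B must leave some point x of B uncovered, so it
contains all other blocks through x; minimality forces equality. Conversely the blocks
through x form a cutset as soon as every other point y of B lies on another block missing x.
In a Steiner system such a block is the unique block through y, a point z outside B and
t - 2 further points of B: if it contained x, it would share t points with B.\<close>

definition blocks_through :: "'a set set \<Rightarrow> 'a set \<Rightarrow> 'a \<Rightarrow> 'a set set" where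
  "blocks_through \<B> B x = {B' \<in> \<B> - {B}. x \<in> B'}"

lemma repair_set_avoiding_iff:
  "(\<exists>\<P>. repair_set \<B> B \<P> \<and> \<P> \<subseteq> (\<B> - {B}) - \<C>) \<longleftrightarrow> B \<subseteq> \<Union>((\<B> - {B}) - \<C>)"
proof
  assume "\<exists>\<P>. repair_set \<B> B \<P> \<and> \<P> \<subseteq> (\<B> - {B}) - \<C>"
  then show "B \<subseteq> \<Union>((\<B> - {B}) - \<C>)" unfolding repair_set_def by blast
next
  assume "B \<subseteq> \<Union>((\<B> - {B}) - \<C>)"
  then have "repair_set \<B> B ((\<B> - {B}) - \<C>)" unfolding repair_set_def by blast
  then show "\<exists>\<P>. repair_set \<B> B \<P> \<and> \<P> \<subseteq> (\<B> - {B}) - \<C>" by blast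
qed

lemma cutset_iff:
  "cutset \<B> B \<C> \<longleftrightarrow>
     \<C> \<subseteq> \<B> - {B} \<and> \<not> B \<subseteq> \<Union>((\<B> - {B}) - \<C>) \<and>
     (\<forall>\<C>' \<subset> \<C>. B \<subseteq> \<Union>((\<B> - {B}) - \<C>'))"
  unfolding cutset_def repair_set_avoiding_iff ..

lemma cutset_eq_blocks_through:
  assumes "cutset \<B> B \<C>"
  obtains x where "x \<in> B" and "\<C> = blocks_through \<B> B x"
proof -
  from assms obtain x where x: "x \<in> B" "x \<notin> \<Union>((\<B> - {B}) - \<C>)"
    unfolding cutset_iff by blast
  then have sub: "blocks_through \<B> B x \<subseteq> \<C>"
    unfolding blocks_through_def by blast
  have "\<not> blocks_through \<B> B x \<subset> \<C>"
  proof
    assume "blocks_through \<B> B x \<subset> \<C>"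
    with assms have "B \<subseteq> \<Union>((\<B> - {B}) - blocks_through \<B> B x)"
      unfolding cutset_iff by blast
    with x show False unfolding blocks_through_def by blast
  qed
  with sub x show thesis using that by blast
qed

lemma blocks_through_cutset:
  assumes "x \<in> B"
    and separated: "\<And>y. y \<in> B \<Longrightarrow> y \<noteq> x \<Longrightarrow> \<exists>B'\<in>\<B>. B' \<noteq> B \<and> y \<in> B' \<and> x \<notin> B'"
  shows "cutset \<B> B (blocks_through \<B> B x)"
  unfolding cutset_iff
proof (intro conjI allI impI)
  show "blocks_through \<B> B x \<subseteq> \<B> - {B}" "\<not> B \<subseteq> \<Union>((\<B> - {B}) - blocks_through \<B> B x)"
    using \<open>x \<in> B\<close> unfolding blocks_through_def by auto
next
  fix \<C>' assume smaller: "\<C>' \<subset> blocks_through \<B> B x"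
  show "B \<subseteq> \<Union>((\<B> - {B}) - \<C>')"
  proof
    fix y assume "y \<in> B"
    show "y \<in> \<Union>((\<B> - {B}) - \<C>')"
    proof (cases "y = x")
      case True
      with smaller show ?thesis unfolding blocks_through_def by blast
    next
      case False
      with separated[OF \<open>y \<in> B\<close>] smaller show ?thesis unfolding blocks_through_def by blast
    qed
  qed
qed

lemma steiner_design_block_through:
  assumes "t_design X \<B> t v k 1" and "T \<subseteq> X" and "card T = t"
  obtains B where "{B' \<in> \<B>. T \<subseteq> B'} = {B}"
proof -
  have "card {B' \<in> \<B>. T \<subseteq> B'} = 1" using assms unfolding t_design_def by blast
  then show thesis using that by (rule card_1_singletonE)
qed

lemma steiner_design_separates_points:
  assumes design: "t_design X \<B> t v k 1" and "2 \<le> t" "t \<le> k" "k < v"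
    and "B \<in> \<B>" and "x \<in> B" "y \<in> B" "x \<noteq> y"
  shows "\<exists>B'\<in>\<B>. B' \<noteq> B \<and> y \<in> B' \<and> x \<notin> B'"
proof -
  have "finite X" "card X = v" "B \<subseteq> X" "card B = k"
    using design \<open>B \<in> \<B>\<close> unfolding t_design_def by auto
  then have "B \<noteq> X" using \<open>k < v\<close> by auto
  then obtain z where z: "z \<in> X" "z \<notin> B" using \<open>B \<subseteq> X\<close> by blast
  have "card (B - {x, y}) = k - 2"
    using \<open>x \<in> B\<close> \<open>y \<in> B\<close> \<open>x \<noteq> y\<close> \<open>card B = k\<close> \<open>finite X\<close> \<open>B \<subseteq> X\<close>
    by (simp add: card_Diff_subset finite_subset)
  then have "t - 2 \<le> card (B - {x, y})" using \<open>t \<le> k\<close> by simp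
  then obtain S where S: "S \<subseteq> B - {x, y}" "card S = t - 2" "finite S"
    by (rule obtain_subset_with_card_n)
  let ?T = "insert y (insert z S)" and ?T' = "insert x (insert y S)"
  have "x \<notin> S" "y \<notin> S" "z \<notin> S" "y \<noteq> z" using S z \<open>y \<in> B\<close> by auto
  then have card_T: "card ?T = t" "card ?T' = t" using S \<open>x \<noteq> y\<close> \<open>2 \<le> t\<close> by simp_all
  have T_X: "?T \<subseteq> X" "?T' \<subseteq> X" using S z \<open>x \<in> B\<close> \<open>y \<in> B\<close> \<open>B \<subseteq> X\<close> by auto
  obtain B' where B': "{C \<in> \<B>. ?T \<subseteq> C} = {B'}"
    using steiner_design_block_through[OF design T_X(1) card_T(1)] .
  obtain B'' where B'': "{C \<in> \<B>. ?T' \<subseteq> C} = {B''}"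
    using steiner_design_block_through[OF design T_X(2) card_T(2)] .
  from B' have "B' \<in> \<B>" "?T \<subseteq> B'" by auto
  then have "B' \<noteq> B" using z by blast
  moreover have "x \<notin> B'"
  proof
    assume "x \<in> B'"
    then have "B' \<in> {C \<in> \<B>. ?T' \<subseteq> C}" using \<open>B' \<in> \<B>\<close> \<open>?T \<subseteq> B'\<close> by simp
    moreover have "B \<in> {C \<in> \<B>. ?T' \<subseteq> C}" using \<open>B \<in> \<B>\<close> S \<open>x \<in> B\<close> \<open>y \<in> B\<close> by blast
    ultimately have "B' = B''" "B = B''" unfolding B'' by simp_all
    with \<open>B' \<noteq> B\<close> show False by simp
  qed
  ultimately show ?thesis using \<open>B' \<in> \<B>\<close> \<open>?T \<subseteq> B'\<close> by blast
qed

theorem mainTheorem7: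
  fixes X :: "'a set" and \<B> :: "'a set set" and B :: "'a set" and t v k :: nat
  assumes "2 \<le> t" and "t < k" and "k < v"
    and "t_design X \<B> t v k 1"
    and "B \<in> \<B>"
  shows "{\<C>. cutset \<B> B \<C>} = (\<lambda>x. {B' \<in> \<B> - {B}. x \<in> B'}) ` B"
proof -
  have "cutset \<B> B (blocks_through \<B> B x)" if "x \<in> B" for x
  proof (rule blocks_through_cutset[OF that])
    fix y assume "y \<in> B" "y \<noteq> x"
    with assms that show "\<exists>B'\<in>\<B>. B' \<noteq> B \<and> y \<in> B' \<and> x \<notin> B'"
      by (intro steiner_design_separates_points[of X \<B> t v k]) simp_all
  qed
  moreover have "\<C> \<in> blocks_through \<B> B ` B" if "cutset \<B> B \<C>" for \<C>
    using that by (rule cutset_eq_blocks_through) blast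
  ultimately have "{\<C>. cutset \<B> B \<C>} = blocks_through \<B> B ` B" by blast
  then show ?thesis unfolding blocks_through_def .
qed

end
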